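(* Let $p$ be a prime with $p\equiv 1\pmod{12}$, and let $a,b$ be positive integers with $p=a^2-12b^2$. Then the equation $z^4+360z^2-48=0$ has a solution $z\in\mathbb{F}_p$ if and only if $a\equiv 1\pmod 3$. *)

theory Defs
  imports "HOL-Number_Theory.Number_Theory"
begin

end

theory Submission
  imports Defs
begin

text \<open>
  Let \<open>s \<equiv> a/b\<close> be a square root of 12 modulo \<open>p\<close>. Then the quartic factors modulo \<open>p\<close> as
  \<open>(z\<^sup>2 - (52s - 180)) (z\<^sup>2 - (-52s - 180))\<close>, and \<open>52s - 180 \<equiv> s ((s - 2)\<^sup>3/16)\<^sup>2\<close>; since \<open>-1\<close>
  is a square, the quartic has a root iff \<open>s\<close> is a square, i.e. iff \<open>(ab/p) = 1\<close>.
  Quadratic reciprocity, applied to each prime factor \<open>q\<close>, gives \<open>(b/p) = 1\<close>, because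
  \<open>p \<equiv> a\<^sup>2 (mod q)\<close> (and \<open>p \<equiv> 1 (mod 8)\<close> when \<open>q = 2\<close>), and \<open>(a/p) = (a/3)\<close>, because
  \<open>p \<equiv> -3 (2b)\<^sup>2 (mod q)\<close> and \<open>(-3/q) = (q/3)\<close>.
\<close>

lemma eq_if_cong_abs_le_1:
  fixes p x y :: int
  assumes "2 < p" "\<bar>x\<bar> \<le> 1" "\<bar>y\<bar> \<le> 1" "[x = y] (mod p)"
  shows "x = y"
proof (rule ccontr)
  assume "x \<noteq> y"
  moreover have "p dvd x - y" using assms(4) by (simp add: cong_iff_dvd_diff)
  ultimately have "\<bar>p\<bar> \<le> \<bar>x - y\<bar>" using dvd_imp_le_int by simp
  then show False using assms(1-3) by linarith
qed

lemma abs_Legendre_le_1: "\<bar>Legendre x p\<bar> \<le> 1"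
  by (simp add: Legendre_def)

lemma euler_criterion_int:
  fixes p x :: int
  assumes "prime p" "2 < p"
  shows "[Legendre x p = x ^ nat ((p - 1) div 2)] (mod p)"
proof -
  have "(nat p - 1) div 2 = nat ((p - 1) div 2)" using assms(2) by (simp add: nat_div_distrib nat_diff_distrib)
  then show ?thesis using euler_criterion[of "nat p" x] assms by simp
qed

lemma Legendre_eq_if_cong:
  fixes p x y :: int
  assumes "prime p" "2 < p" "[Legendre x p = y] (mod p)" "\<bar>y\<bar> \<le> 1"
  shows "Legendre x p = y"
  using eq_if_cong_abs_le_1[OF assms(2) abs_Legendre_le_1 assms(4,3)] .

lemma Legendre_mult:
  fixes p x y :: int
  assumes "prime p" "2 < p"
  shows "Legendre (x * y) p = Legendre x p * Legendre y p"
proof (rule sym, rule Legendre_eq_if_cong[OF assms, symmetric])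
  let ?h = "nat ((p - 1) div 2)"
  have "[Legendre x p * Legendre y p = x ^ ?h * y ^ ?h] (mod p)"
    by (intro cong_mult euler_criterion_int assms)
  then show "[Legendre (x * y) p = Legendre x p * Legendre y p] (mod p)"
    using euler_criterion_int[OF assms, of "x * y"]
    by (metis cong_sym cong_trans power_mult_distrib)
  show "\<bar>Legendre x p * Legendre y p\<bar> \<le> 1"
    using abs_Legendre_le_1[of x p] abs_Legendre_le_1[of y p] by (simp add: abs_mult mult_le_one)
qed

lemma Legendre_cong:
  fixes p x y :: int
  assumes "prime p" "2 < p" "[x = y] (mod p)"
  shows "Legendre x p = Legendre y p"
proof (rule Legendre_eq_if_cong[OF assms(1,2) _ abs_Legendre_le_1])
  let ?h = "nat ((p - 1) div 2)"
  have "[x ^ ?h = y ^ ?h] (mod p)" using assms(3) by (rule cong_pow)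
  then show "[Legendre x p = Legendre y p] (mod p)"
    using euler_criterion_int[OF assms(1,2), of x] euler_criterion_int[OF assms(1,2), of y]
    by (metis cong_sym cong_trans)
qed

lemma Legendre_eq_1_iff_QuadRes:
  fixes p x :: int
  assumes "\<not> p dvd x"
  shows "Legendre x p = 1 \<longleftrightarrow> QuadRes p x"
  using assms by (simp add: Legendre_def cong_0_iff)

lemma Legendre_square:
  fixes p x :: int
  assumes "prime p" "\<not> p dvd x"
  shows "Legendre (x^2) p = 1"
proof -
  have "\<not> p dvd x^2" using assms by (simp add: prime_dvd_power_iff)
  moreover have "QuadRes p (x^2)" unfolding QuadRes_def using cong_refl by blast
  ultimately show ?thesis by (simp add: Legendre_eq_1_iff_QuadRes)
qed

lemma Legendre_one: "prime p \<Longrightarrow> Legendre 1 p = 1"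
  using Legendre_square[of p 1] prime_gt_1_int[of p] by (simp add: zdvd_not_zless)

lemma Legendre_minus_one:
  fixes p :: int
  assumes "prime p" "p mod 4 = 1"
  shows "Legendre (-1) p = 1"
proof -
  have p2: "2 < p" using assms prime_ge_2_int[of p] by presburger
  have "even ((p - 1) div 2)" using assms(2) by presburger
  then have "(-1::int) ^ nat ((p - 1) div 2) = 1" using p2 by (simp add: even_nat_iff)
  then show ?thesis
    using Legendre_eq_if_cong[OF assms(1) p2] euler_criterion_int[OF assms(1) p2, of "-1"] by simp
qed

text \<open>Gauss' lemma: for \<open>p = 8k + 1\<close> the doubles exceeding \<open>(p - 1) / 2\<close> are \<open>2x\<close>, \<open>2k < x \<le> 4k\<close>.\<close>
lemma Legendre_two:
  fixes p :: int
  assumes "prime p" "p mod 8 = 1"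
  shows "Legendre 2 p = 1"
proof -
  define k where "k = p div 8"
  have p: "p = 8 * k + 1" using assms(2) unfolding k_def by presburger
  have k: "1 \<le> k" using p prime_ge_2_int[OF assms(1)] by linarith
  have ip: "int (nat p) = p" using p k by linarith
  have half: "(p - 1) div 2 = 4 * k" using p by simp
  interpret G: GAUSS "nat p" 2
    using assms(1) p k by unfold_locales (auto simp: cong_def)
  have "G.C = G.B"
    unfolding G.C_def G.B_def G.A_def ip half using p by (auto simp: image_iff)
  then have "G.E = (\<lambda>x. x * 2) ` {2 * k<..4 * k}"
    unfolding G.E_def G.B_def G.A_def ip half by auto
  moreover have "card ((\<lambda>x::int. x * 2) ` {2 * k<..4 * k}) = nat (2 * k)"
    by (subst card_image) (auto simp: inj_on_def)
  ultimately have "card G.E = 2 * nat k" by simp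
  then show ?thesis using G.gauss_lemma ip by simp
qed

lemma Legendre_reciprocity_1_mod_4:
  fixes p q :: int
  assumes "prime p" "p mod 4 = 1" "prime q" "2 < q" "q \<noteq> p"
  shows "Legendre q p = Legendre p q"
proof -
  have p2: "2 < p" using assms(1,2) prime_ge_2_int[of p] by presburger
  have "even ((q - 1) div 2 * ((p - 1) div 2))" using assms(2) by presburger
  moreover have "0 \<le> (q - 1) div 2 * ((p - 1) div 2)" using p2 assms(4) by simp
  ultimately have "Legendre q p * Legendre p q = 1"
    using Quadratic_Reciprocity_int[of q p] assms p2 by (simp add: even_nat_iff)
  moreover have "Legendre q p \<in> {-1, 0, 1}" "Legendre p q \<in> {-1, 0, 1}"
    using abs_Legendre_le_1[of q p] abs_Legendre_le_1[of p q] by auto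
  ultimately show ?thesis by auto
qed

lemma Legendre_3_eq_1_iff: "Legendre n 3 = 1 \<longleftrightarrow> n mod 3 = 1"
proof -
  have "Legendre n 3 = Legendre (n mod 3) 3" by (rule Legendre_cong) (simp_all add: cong_def)
  moreover have "\<not> QuadRes 3 2"
  proof
    assume "QuadRes 3 2"
    then obtain y :: int where "(y mod 3)^2 mod 3 = 2" unfolding QuadRes_def by (auto simp: cong_def power_mod)
    moreover have "y mod 3 \<in> {0, 1, 2}" by auto
    ultimately show False by auto
  qed
  moreover have "n mod 3 \<in> {0, 1, 2}" by auto
  ultimately show ?thesis using Legendre_one[of 3] by (auto simp: Legendre_def cong_def)
qed

lemma Legendre_minus_three:
  fixes q :: int
  assumes "prime q" "3 < q"
  shows "Legendre (-3) q = Legendre q 3"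
proof -
  let ?h = "nat ((q - 1) div 2)"
  have q2: "2 < q" using assms(2) by simp
  have minus_one: "Legendre (-1) q = (-1) ^ ?h"
    by (rule Legendre_eq_if_cong[OF assms(1) q2 euler_criterion_int[OF assms(1) q2]]) (simp add: power_abs)
  have reciprocity: "Legendre 3 q * Legendre q 3 = (-1) ^ ?h"
    using Quadratic_Reciprocity_int[of 3 q] assms by simp
  have "\<not> 3 dvd q" using primes_dvd_imp_eq[of 3 q] assms by force
  then have "Legendre q 3 * Legendre q 3 = 1"
    using Legendre_square[of 3 q] Legendre_mult[of 3 q q] by (simp add: power2_eq_square)
  then have "Legendre 3 q = (-1) ^ ?h * Legendre q 3"
    using reciprocity by (metis mult.assoc mult_1_right)
  moreover have "(-1::int) ^ ?h * (-1) ^ ?h = 1" by (simp flip: power_mult_distrib)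
  moreover have "Legendre (-3) q = Legendre (-1) q * Legendre 3 q"
    using Legendre_mult[OF assms(1) q2, of "-1" 3] by simp
  ultimately show ?thesis using minus_one by (metis mult.assoc mult_1)
qed

lemma multiplicative_eq_if_eq_on_prime_divisors:
  fixes f g :: "int \<Rightarrow> 'a::monoid_mult" and n :: int
  assumes f: "\<And>x y. f (x * y) = f x * f y" and g: "\<And>x y. g (x * y) = g x * g y"
    and "f 1 = g 1" and "\<And>q. prime q \<Longrightarrow> q dvd n \<Longrightarrow> f q = g q" and "0 < n"
  shows "f n = g n"
  using assms(4,5)
proof (induction n rule: prime_divisors_induct)
  case (unit x)
  then show ?case using \<open>f 1 = g 1\<close> by simp
next
  case (factor q x)
  then have "0 < x" using prime_gt_0_int[of q] by (simp add: zero_less_mult_iff)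
  then show ?case using factor f g by simp
qed simp

lemma QuadRes_cong: "[x = y] (mod p) \<Longrightarrow> QuadRes p x \<longleftrightarrow> QuadRes p y"
  unfolding QuadRes_def using cong_trans cong_sym by metis

lemma QuadRes_mult_square_iff:
  fixes p t x :: int
  assumes "prime p" "\<not> p dvd t"
  shows "QuadRes p (x * t^2) \<longleftrightarrow> QuadRes p x"
proof
  assume "QuadRes p (x * t^2)"
  then obtain y where y: "[y^2 = x * t^2] (mod p)" unfolding QuadRes_def by blast
  have "coprime t p" using assms by (simp add: prime_imp_coprime coprime_commute)
  then obtain u where u: "[t * u = 1] (mod p)" using cong_solve_coprime_int by blast
  have "[(y * u)^2 = x * t^2 * u^2] (mod p)" using y by (simp add: power_mult_distrib cong_mult)
  moreover have "[x * t^2 * u^2 = x * 1^2] (mod p)"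
    using u by (metis cong_mult cong_pow cong_refl mult.assoc power_mult_distrib)
  ultimately show "QuadRes p x" unfolding QuadRes_def by (metis cong_trans mult_1_right power_one)
next
  assume "QuadRes p x"
  then obtain y where "[y^2 = x] (mod p)" unfolding QuadRes_def by blast
  then have "[(y * t)^2 = x * t^2] (mod p)" by (simp add: power_mult_distrib cong_mult)
  then show "QuadRes p (x * t^2)" unfolding QuadRes_def by blast
qed

lemma QuadRes_minus_iff:
  fixes p x :: int
  assumes "prime p" "p mod 4 = 1"
  shows "QuadRes p (-x) \<longleftrightarrow> QuadRes p x"
proof -
  have "\<not> p dvd -1" using assms(1) by (simp add: prime_int_iff)
  then obtain i where i: "[i^2 = -1] (mod p)"
    using Legendre_minus_one[OF assms] Legendre_eq_1_iff_QuadRes unfolding QuadRes_def by blast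
  have "\<not> p dvd i"
  proof
    assume "p dvd i"
    then have "p dvd i^2" by (simp add: power2_eq_square)
    moreover have "p dvd i^2 + 1" using i by (simp add: cong_iff_dvd_diff)
    ultimately have "p dvd 1" by (simp add: dvd_add_right_iff)
    then show False using \<open>\<not> p dvd -1\<close> by simp
  qed
  have "[-x = x * i^2] (mod p)" using cong_mult[OF cong_refl[of x] i] by (simp add: cong_sym)
  then show ?thesis using QuadRes_cong QuadRes_mult_square_iff[OF assms(1) \<open>\<not> p dvd i\<close>] by metis
qed

lemma QuadRes_52s_minus_180_iff:
  fixes p s :: int
  assumes "prime p" "odd p" "[s^2 = 12] (mod p)"
  shows "QuadRes p (52 * s - 180) \<longleftrightarrow> QuadRes p s"
proof -
  have s: "p dvd s^2 - 12" using assms(3) by (simp add: cong_iff_dvd_diff)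
  have not_dvd_2: "\<not> p dvd 2" using assms(1,2) primes_dvd_imp_eq[of p 2] by auto
  then have "\<not> p dvd 2^4" using prime_dvd_power[OF assms(1)] by blast
  then have not_dvd_16: "\<not> p dvd 16" by simp
  have not_dvd_cube: "\<not> p dvd (s - 2)^3"
  proof
    assume "p dvd (s - 2)^3"
    then have "p dvd (s - 2) * (s + 2) - (s^2 - 12)"
      using s assms(1) by (simp add: prime_dvd_power_iff)
    then have "p dvd 2^3" by (simp add: algebra_simps power2_eq_square)
    then show False using not_dvd_2 prime_dvd_power[OF assms(1), of 2 3] by simp
  qed
  have "s * ((s - 2)^3)^2 - (52 * s - 180) * 16^2
      = (s^2 - 12) * (s^5 - 12*s^4 + 72*s^3 - 304*s^2 + 1104*s - 3840)"
    by (simp add: eval_nat_numeral algebra_simps)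
  then have "[(52 * s - 180) * 16^2 = s * ((s - 2)^3)^2] (mod p)"
    using s by (simp add: cong_iff_dvd_diff dvd_diff_commute)
  then have "QuadRes p ((52 * s - 180) * 16^2) \<longleftrightarrow> QuadRes p (s * ((s - 2)^3)^2)"
    by (rule QuadRes_cong)
  then show ?thesis
    unfolding QuadRes_mult_square_iff[OF assms(1) not_dvd_16]
      QuadRes_mult_square_iff[OF assms(1) not_dvd_cube] .
qed

lemma quartic_solvable_iff_QuadRes:
  fixes p s :: int
  assumes "prime p" "p mod 4 = 1" "[s^2 = 12] (mod p)"
  shows "(\<exists>z. [z^4 + 360 * z^2 - 48 = 0] (mod p)) \<longleftrightarrow> QuadRes p s"
proof -
  have odd: "odd p" using assms(2) by presburger
  have factors: "[z^4 + 360 * z^2 - 48 = 0] (mod p) \<longleftrightarrow>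
      [z^2 = 52 * s - 180] (mod p) \<or> [z^2 = 52 * (-s) - 180] (mod p)" for z
  proof -
    have "z^4 + 360 * z^2 - 48
        = (z^2 - (52 * s - 180)) * (z^2 - (52 * (-s) - 180)) + 2704 * (s^2 - 12)"
      by (simp add: eval_nat_numeral algebra_simps)
    moreover have "p dvd 2704 * (s^2 - 12)"
      using assms(3) unfolding cong_iff_dvd_diff by (rule dvd_mult)
    ultimately have "p dvd z^4 + 360 * z^2 - 48 \<longleftrightarrow>
        p dvd (z^2 - (52 * s - 180)) * (z^2 - (52 * (-s) - 180))"
      by (simp only: dvd_add_left_iff)
    then show ?thesis using assms(1) by (simp add: cong_0_iff cong_iff_dvd_diff prime_dvd_mult_iff)
  qed
  have "(\<exists>z. [z^4 + 360 * z^2 - 48 = 0] (mod p)) \<longleftrightarrow>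
      QuadRes p (52 * s - 180) \<or> QuadRes p (52 * (-s) - 180)"
    unfolding factors QuadRes_def by blast
  also have "\<dots> \<longleftrightarrow> QuadRes p s \<or> QuadRes p (-s)"
    using QuadRes_52s_minus_180_iff[OF assms(1) odd assms(3)]
      QuadRes_52s_minus_180_iff[OF assms(1) odd, of "-s"] assms(3) by simp
  also have "\<dots> \<longleftrightarrow> QuadRes p s" using QuadRes_minus_iff[OF assms(1,2)] by simp
  finally show ?thesis .
qed

locale prime_a2_minus_12b2 =
  fixes p a b :: int
  assumes prime_p: "prime p" and p_mod_12: "p mod 12 = 1" and p_eq: "p = a^2 - 12 * b^2"
begin

lemma prime_dvd_a_b_eq:
  assumes "prime q" "q dvd a" "q dvd b"
  shows "q = p"
proof -
  have "q dvd a^2 - 12 * b^2" using assms(2,3) by (simp add: power2_eq_square)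
  then show ?thesis using p_eq primes_dvd_imp_eq[OF assms(1) prime_p] by simp
qed

lemma p_gt_12: "12 < p"
  using p_mod_12 prime_gt_1_int[OF prime_p] by presburger

lemma p_mod_4: "p mod 4 = 1"
  using p_mod_12 by presburger

lemma a_square_eq: "a^2 = p + 12 * b^2"
  using p_eq by simp

lemma not_dvd_b: "\<not> p dvd b"
proof
  assume "p dvd b"
  then have "p dvd p + 12 * b^2" by (simp add: power2_eq_square)
  then have "p dvd a^2" by (simp add: a_square_eq)
  then have "p dvd a" using prime_dvd_power[OF prime_p] by blast
  then have "p^2 dvd a^2 - 12 * b^2" using \<open>p dvd b\<close> by (simp add: dvd_diff)
  then have "p^2 \<le> p" using p_eq prime_gt_0_int[OF prime_p] by (simp add: zdvd_imp_le)
  then show False using prime_gt_1_int[OF prime_p] by (simp add: power2_eq_square)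
qed

lemma not_dvd_a: "\<not> p dvd a"
proof
  assume "p dvd a"
  then have "p dvd a^2 - p" by (simp add: power2_eq_square)
  then have "p dvd 12 * b^2" by (simp add: a_square_eq)
  moreover have "\<not> p dvd 12" using p_gt_12 by (auto dest: zdvd_imp_le)
  ultimately show False using not_dvd_b prime_p by (simp add: prime_dvd_mult_iff prime_dvd_power_iff)
qed

lemma odd_a: "odd a"
proof
  assume "even a"
  then have "even (p + 12 * b^2)" by (simp flip: a_square_eq)
  then show False using p_mod_12 by presburger
qed

lemma Legendre_prime_dvd_b:
  assumes "prime q" "q dvd b"
  shows "Legendre q p = 1"
proof (cases "q = 2")
  case True
  then obtain c where c: "b = 2 * c" using assms(2) by blast
  obtain u where u: "a = 2 * u + 1" using odd_a by (blast elim: oddE)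
  have "even (u * (u + 1))" by simp
  then obtain w where "u * (u + 1) = 2 * w" by blast
  then have "p - 1 = 8 * (w - 6 * c^2)" using p_eq unfolding c u by (simp add: power2_eq_square algebra_simps)
  then have "8 dvd p - 1" by simp
  then have "p mod 8 = 1" by presburger
  then show ?thesis using Legendre_two[OF prime_p] True by simp
next
  case False
  then have "2 < q" using prime_ge_2_int[OF assms(1)] by simp
  have "q \<noteq> p" using assms(2) not_dvd_b by auto
  then have "\<not> q dvd a" using prime_dvd_a_b_eq assms by blast
  have "q dvd 12 * b^2" using assms(2) by (simp add: power2_eq_square)
  then have "q dvd a^2 - p" by (simp add: a_square_eq)
  then have "[p = a^2] (mod q)" by (simp add: cong_iff_dvd_diff dvd_diff_commute)
  then have "Legendre p q = 1"
    using Legendre_cong[OF assms(1) \<open>2 < q\<close>] Legendre_square[OF assms(1) \<open>\<not> q dvd a\<close>] by simp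
  then show ?thesis
    using Legendre_reciprocity_1_mod_4 prime_p p_mod_4 assms(1) \<open>2 < q\<close> \<open>q \<noteq> p\<close> by simp
qed

lemma Legendre_prime_dvd_a:
  assumes "prime q" "q dvd a"
  shows "Legendre q p = Legendre q 3"
proof -
  have "q dvd a^2" using assms(2) by (simp add: power2_eq_square)
  have "q \<noteq> 2" using odd_a assms(2) by auto
  moreover have "q \<noteq> 3"
  proof
    assume "q = 3"
    then have "3 dvd p + 12 * b^2" using \<open>q dvd a^2\<close> by (simp add: a_square_eq)
    then have "3 dvd p" by (simp add: dvd_add_left_iff)
    then show False using p_mod_12 by presburger
  qed
  ultimately have "3 < q" using prime_ge_2_int[OF assms(1)] by simp
  have "\<not> q dvd b" using prime_dvd_a_b_eq assms not_dvd_a by blast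
  then have "\<not> q dvd 2 * b" using assms(1) \<open>3 < q\<close> by (auto simp: prime_dvd_mult_iff dest: zdvd_imp_le)
  have "q \<noteq> p" using assms(2) not_dvd_a by auto
  have "p - (-3) * (2 * b)^2 = a^2" by (simp add: a_square_eq power_mult_distrib)
  then have "[p = -3 * (2 * b)^2] (mod q)" using \<open>q dvd a^2\<close> by (simp add: cong_iff_dvd_diff)
  then have "Legendre p q = Legendre (-3 * (2 * b)^2) q"
    using \<open>3 < q\<close> by (intro Legendre_cong[OF assms(1)]) simp_all
  also have "\<dots> = Legendre (-3) q * Legendre ((2 * b)^2) q"
    using \<open>3 < q\<close> by (intro Legendre_mult[OF assms(1)]) simp
  finally have "Legendre p q = Legendre q 3"
    using Legendre_square[OF assms(1) \<open>\<not> q dvd 2 * b\<close>] Legendre_minus_three[OF assms(1) \<open>3 < q\<close>] by simp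
  then show ?thesis
    using Legendre_reciprocity_1_mod_4 prime_p p_mod_4 assms(1) \<open>3 < q\<close> \<open>q \<noteq> p\<close> by simp
qed

lemma Legendre_a_eq:
  assumes "0 < a"
  shows "Legendre a p = Legendre a 3"
proof (rule multiplicative_eq_if_eq_on_prime_divisors[where f = "\<lambda>n. Legendre n p" and g = "\<lambda>n. Legendre n 3"])
  show "Legendre (x * y) p = Legendre x p * Legendre y p" for x y
    using Legendre_mult[OF prime_p] p_gt_12 by simp
  show "Legendre (x * y) 3 = Legendre x 3 * Legendre y 3" for x y
    by (rule Legendre_mult) simp_all
  show "Legendre 1 p = Legendre 1 3" using Legendre_one prime_p by simp
qed (use Legendre_prime_dvd_a assms in auto)

lemma Legendre_b_eq:
  assumes "0 < b"
  shows "Legendre b p = 1"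
proof (rule multiplicative_eq_if_eq_on_prime_divisors[where f = "\<lambda>n. Legendre n p" and g = "\<lambda>_. 1"])
  show "Legendre (x * y) p = Legendre x p * Legendre y p" for x y
    using Legendre_mult[OF prime_p] p_gt_12 by simp
qed (use Legendre_prime_dvd_b assms Legendre_one[OF prime_p] in auto)

lemma quartic_solvable_iff_QuadRes_a_b:
  "(\<exists>z. [z^4 + 360 * z^2 - 48 = 0] (mod p)) \<longleftrightarrow> QuadRes p (a * b)"
proof -
  have "coprime b p" using prime_imp_coprime[OF prime_p not_dvd_b] by (simp add: coprime_commute)
  then obtain v where v: "[b * v = 1] (mod p)" using cong_solve_coprime_int by blast
  define s where "s = a * v"
  have "[a * (b * v) = a * 1] (mod p)" using v by (rule cong_mult[OF cong_refl])
  then have s_b: "[s * b = a] (mod p)" by (simp add: s_def ac_simps)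
  have "[a^2 = 12 * b^2] (mod p)" by (simp add: a_square_eq cong_iff_dvd_diff)
  then have "[(s * b)^2 = 12 * b^2] (mod p)" using cong_trans[OF cong_pow[OF s_b]] by blast
  then have "[s^2 * b^2 = 12 * b^2] (mod p)" by (simp add: power_mult_distrib)
  moreover have "coprime (b^2) p" using \<open>coprime b p\<close> by simp
  ultimately have s_square: "[s^2 = 12] (mod p)" using cong_mult_rcancel by blast
  have "[s * b^2 = a * b] (mod p)" using cong_mult[OF s_b cong_refl[of b]] by (simp add: power2_eq_square ac_simps)
  have "(\<exists>z. [z^4 + 360 * z^2 - 48 = 0] (mod p)) \<longleftrightarrow> QuadRes p s"
    by (rule quartic_solvable_iff_QuadRes[OF prime_p p_mod_4 s_square])
  also have "\<dots> \<longleftrightarrow> QuadRes p (s * b^2)" by (simp add: QuadRes_mult_square_iff[OF prime_p not_dvd_b])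
  also have "\<dots> \<longleftrightarrow> QuadRes p (a * b)" by (rule QuadRes_cong) fact
  finally show ?thesis .
qed

end

theorem theorem4:
  fixes p a b :: int
  assumes "prime p"
    and "[p = 1] (mod 12)"
    and "a > 0" and "b > 0"
    and "p = a^2 - 12 * b^2"
  shows "(\<exists>z::int. [z^4 + 360 * z^2 - 48 = 0] (mod p)) \<longleftrightarrow> [a = 1] (mod 3)"
proof -
  interpret prime_a2_minus_12b2 p a b
    using assms by unfold_locales (simp_all add: cong_def)
  have "2 < p" using p_gt_12 by simp
  have "\<not> p dvd a * b" using not_dvd_a not_dvd_b prime_p by (simp add: prime_dvd_mult_iff)
  have "(\<exists>z. [z^4 + 360 * z^2 - 48 = 0] (mod p)) \<longleftrightarrow> QuadRes p (a * b)"
    by (rule quartic_solvable_iff_QuadRes_a_b)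
  also have "\<dots> \<longleftrightarrow> Legendre a p * Legendre b p = 1"
    using Legendre_eq_1_iff_QuadRes[OF \<open>\<not> p dvd a * b\<close>] Legendre_mult[OF prime_p \<open>2 < p\<close>] by simp
  also have "\<dots> \<longleftrightarrow> Legendre a 3 = 1"
    using Legendre_a_eq[OF assms(3)] Legendre_b_eq[OF assms(4)] by simp
  also have "\<dots> \<longleftrightarrow> [a = 1] (mod 3)" by (simp add: Legendre_3_eq_1_iff cong_def)
  finally show ?thesis .
qed

end
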